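(* Let $G=K\rtimes_\phi H$ be a finite Frobenius group with kernel $K$ and complement $H$, and suppose $K$ is abelian. Then $\mathrm{Aut}(G)\cong K\rtimes N_{\mathrm{Aut}(K)}(\phi(H))$, which is a subgroup of the holomorph $\mathrm{Hol}(K)=K\rtimes\mathrm{Aut}(K)$ (with $\mathrm{Aut}(K)$ acting naturally on $K$).
   Context: A finite group $G=K\rtimes_\phi H$ with $K,H$ nontrivial is a Frobenius group with kernel $K$ and complement $H$ if for every $h\in H$, $h\neq1$, the automorphism $\phi(h)$ fixes no nonidentity element of $K$. $N_{\mathrm{Aut}(K)}(\phi(H))$ is the normalizer of $\phi(H)$ in $\mathrm{Aut}(K)$. *)

theory Defs
  imports "HOL-Algebra.Algebra"
begin

definition semidirect_product ::
  "('k, 'a) monoid_scheme \<Rightarrow> ('h, 'b) monoid_scheme \<Rightarrow> ('h \<Rightarrow> 'k \<Rightarrow> 'k) \<Rightarrow> ('k \<times> 'h) monoid"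
  where "semidirect_product K H alpha =
    \<lparr> carrier = carrier K \<times> carrier H,
      monoid.mult = (\<lambda>(k1, h1) (k2, h2). (k1 \<otimes>\<^bsub>K\<^esub> alpha h1 k2, h1 \<otimes>\<^bsub>H\<^esub> h2)),
      one = (\<one>\<^bsub>K\<^esub>, \<one>\<^bsub>H\<^esub>) \<rparr>"

definition holomorph :: "('k, 'a) monoid_scheme \<Rightarrow> ('k \<times> ('k \<Rightarrow> 'k)) monoid"
  where "holomorph K = semidirect_product K (AutoGroup K) (\<lambda>a. a)"

definition frobenius_action ::
  "('k, 'a) monoid_scheme \<Rightarrow> ('h, 'b) monoid_scheme \<Rightarrow> ('h \<Rightarrow> 'k \<Rightarrow> 'k) \<Rightarrow> bool"
  where "frobenius_action K H phi \<longleftrightarrow>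
    carrier K \<noteq> {\<one>\<^bsub>K\<^esub>} \<and> carrier H \<noteq> {\<one>\<^bsub>H\<^esub>} \<and>
    (\<forall>h \<in> carrier H. h \<noteq> \<one>\<^bsub>H\<^esub> \<longrightarrow>
       (\<forall>k \<in> carrier K. phi h k = k \<longrightarrow> k = \<one>\<^bsub>K\<^esub>))"

end

theory Submission
  imports Defs
begin

text \<open>Since \<open>H\<close> acts regularly on \<open>K - {1}\<close>, \<open>|K| \<equiv> 1 (mod |H|)\<close>; in particular the orders
  of \<open>K\<close> and \<open>H\<close> are coprime, so every automorphism \<open>\<theta>\<close> of \<open>G = K \<rtimes> H\<close> maps \<open>K\<close> into
  itself. Its restriction \<open>\<beta>\<close> to \<open>K\<close> normalizes \<open>\<phi>(H)\<close>, via \<open>\<beta> \<phi>(h) \<beta>\<inverse> = \<phi>(\<tau> h)\<close> where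
  \<open>\<theta>(1, h) = (c h, \<tau> h)\<close>, and \<open>c\<close> is a 1-cocycle. As \<open>|H|\<close>-th powers are invertible on the
  abelian group \<open>K\<close>, the cocycle is a coboundary, so \<open>\<theta>\<close> is \<open>(x, h) \<mapsto> (\<beta> x, \<tau> h)\<close> followed
  by conjugation with some \<open>(k, 1)\<close>. Conversely each \<open>k \<in> K\<close> and \<open>a\<close> in the normalizer \<open>N\<close> of \<open>\<phi>(H)\<close> in
  \<open>Aut(K)\<close> induce such an automorphism; the correspondence is injective by fixed-point-freeness and
  turns the product of \<open>K \<rtimes> N\<close> into composition.\<close>

section \<open>Automorphisms of a group\<close>

lemma carrier_AutoGroup [simp]: "carrier (AutoGroup G) = auto G"
  by (simp add: AutoGroup_def)

lemma AutoGroup_mult: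
  "f \<in> auto G \<Longrightarrow> g \<in> auto G \<Longrightarrow> f \<otimes>\<^bsub>AutoGroup G\<^esub> g = compose (carrier G) f g"
  by (simp add: AutoGroup_def BijGroup_def auto_def)

context group
begin

lemma auto_group_hom: "a \<in> auto G \<Longrightarrow> group_hom G G a"
  by (simp add: auto_def group_hom_def group_hom_axioms_def group_axioms)

lemma auto_closed [simp]: "a \<in> auto G \<Longrightarrow> x \<in> carrier G \<Longrightarrow> a x \<in> carrier G"
  using group_hom.hom_closed[OF auto_group_hom] .

lemma auto_mult [simp]:
  "a \<in> auto G \<Longrightarrow> x \<in> carrier G \<Longrightarrow> y \<in> carrier G \<Longrightarrow> a (x \<otimes> y) = a x \<otimes> a y"
  using group_hom.hom_mult[OF auto_group_hom] .

lemma auto_one [simp]: "a \<in> auto G \<Longrightarrow> a \<one> = \<one>"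
  using group_hom.hom_one[OF auto_group_hom] .

lemma auto_inv [simp]: "a \<in> auto G \<Longrightarrow> x \<in> carrier G \<Longrightarrow> a (inv x) = inv (a x)"
  using group_hom.hom_inv[OF auto_group_hom] .

lemma auto_pow [simp]:
  "a \<in> auto G \<Longrightarrow> x \<in> carrier G \<Longrightarrow> a (x [^] (n::nat)) = a x [^] n"
  using group_hom.hom_nat_pow[OF auto_group_hom] .

lemma auto_bij_betw: "a \<in> auto G \<Longrightarrow> bij_betw a (carrier G) (carrier G)"
  by (simp add: auto_def Bij_def)

lemma auto_inj: "a \<in> auto G \<Longrightarrow> x \<in> carrier G \<Longrightarrow> y \<in> carrier G \<Longrightarrow> a x = a y \<Longrightarrow> x = y"
  using auto_bij_betw by (auto simp: bij_betw_def dest: inj_onD)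

lemma auto_surj: "a \<in> auto G \<Longrightarrow> y \<in> carrier G \<Longrightarrow> \<exists>x\<in>carrier G. y = a x"
  using auto_bij_betw by (auto simp: bij_betw_def)

lemma auto_eqI:
  assumes "a \<in> auto G" "b \<in> auto G" "\<And>x. x \<in> carrier G \<Longrightarrow> a x = b x"
  shows "a = b"
  using assms by (intro extensionalityI[of _ "carrier G"]) (auto simp: auto_def Bij_def)

lemma AutoGroup_mult_apply [simp]:
  "a \<in> auto G \<Longrightarrow> b \<in> auto G \<Longrightarrow> x \<in> carrier G \<Longrightarrow> (a \<otimes>\<^bsub>AutoGroup G\<^esub> b) x = a (b x)"
  by (simp add: AutoGroup_mult compose_def)

lemma AutoGroup_mult_closed [simp]:
  "a \<in> auto G \<Longrightarrow> b \<in> auto G \<Longrightarrow> a \<otimes>\<^bsub>AutoGroup G\<^esub> b \<in> auto G"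
  using monoid.m_closed[OF group.is_monoid[OF AutoGroup]] by simp

lemma AutoGroup_inv_closed [simp]: "a \<in> auto G \<Longrightarrow> inv\<^bsub>AutoGroup G\<^esub> a \<in> auto G"
  using group.inv_closed[OF AutoGroup] by simp

lemma AutoGroup_inv:
  assumes "a \<in> auto G"
  shows "inv\<^bsub>AutoGroup G\<^esub> a = restrict (inv_into (carrier G) a) (carrier G)"
proof -
  have "inv\<^bsub>AutoGroup G\<^esub> a = inv\<^bsub>BijGroup (carrier G)\<^esub> a"
    using group.m_inv_consistent[OF group_BijGroup subgroup_auto assms]
    by (simp add: AutoGroup_def)
  then show ?thesis
    using assms inv_BijGroup[of a "carrier G"] by (simp add: auto_def)
qed

lemma AutoGroup_inv_apply [simp]:
  "a \<in> auto G \<Longrightarrow> x \<in> carrier G \<Longrightarrow> a ((inv\<^bsub>AutoGroup G\<^esub> a) x) = x"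
  using auto_bij_betw by (simp add: AutoGroup_inv bij_betw_def f_inv_into_f)

lemma AutoGroup_apply_inv [simp]:
  "a \<in> auto G \<Longrightarrow> x \<in> carrier G \<Longrightarrow> (inv\<^bsub>AutoGroup G\<^esub> a) (a x) = x"
  using auto_bij_betw by (simp add: AutoGroup_inv bij_betw_def inv_into_f_f)

end

lemma (in group) surj_const_mult_right:
  assumes "a \<in> carrier G"
  shows "(\<lambda>x. x \<otimes> a) ` carrier G = carrier G"
proof
  show "carrier G \<subseteq> (\<lambda>x. x \<otimes> a) ` carrier G"
  proof
    fix x
    assume x: "x \<in> carrier G"
    then have "x = (x \<otimes> inv a) \<otimes> a"
      using assms by (simp add: m_assoc)
    with x assms show "x \<in> (\<lambda>x. x \<otimes> a) ` carrier G"
      by blast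
  qed
qed (use assms in auto)

lemma (in comm_group) auto_finprod:
  assumes a: "a \<in> auto G" and f: "f \<in> B \<rightarrow> carrier G"
  shows "a (finprod G f B) = finprod G (\<lambda>b. a (f b)) B"
  using f
proof (induction B rule: infinite_finite_induct)
  case (insert b B)
  then have "(\<lambda>b. a (f b)) \<in> B \<rightarrow> carrier G"
    using a by (auto simp: Pi_iff)
  with insert a show ?case
    by simp
qed (use a in simp_all)

lemma (in group) inv_cancel_middle:
  "x \<in> carrier G \<Longrightarrow> y \<in> carrier G \<Longrightarrow> z \<in> carrier G \<Longrightarrow> x \<otimes> inv y \<otimes> (y \<otimes> z) = x \<otimes> z"
  by (simp add: m_assoc inv_solve_left')

lemma (in comm_group) inv_swap:
  assumes "x \<in> carrier G" "y \<in> carrier G" "z \<in> carrier G" "w \<in> carrier G"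
    and "x \<otimes> inv y = z \<otimes> inv w"
  shows "x \<otimes> inv z = y \<otimes> inv w"
proof -
  have "x \<otimes> inv z = (x \<otimes> inv y) \<otimes> (y \<otimes> inv z)"
    using assms(1-3) by (simp add: m_assoc inv_solve_left)
  also have "\<dots> = (z \<otimes> inv w) \<otimes> (y \<otimes> inv z)"
    using assms(5) by simp
  also have "\<dots> = y \<otimes> inv w"
    using assms(2-4) by (metis inv_closed inv_solve_right m_closed m_comm m_lcomm)
  finally show ?thesis .
qed

lemma image_image_eq_iff:
  "f ` g ` A = g ` A \<longleftrightarrow>
     (\<forall>x\<in>A. \<exists>y\<in>A. f (g x) = g y) \<and> (\<forall>y\<in>A. \<exists>x\<in>A. f (g x) = g y)"
  (is "?L \<longleftrightarrow> ?R")
proof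
  assume L: ?L
  have "\<forall>x\<in>A. f (g x) \<in> g ` A" "\<forall>y\<in>A. g y \<in> f ` g ` A"
    using L by blast+
  then show ?R
    by (metis imageE)
next
  assume ?R
  then show ?L
    by (auto simp: image_iff) (metis imageI)
qed

section \<open>Semidirect products\<close>

locale semidirect = K: group K + H: group H
  for K :: "('k, 'a) monoid_scheme" and H :: "('h, 'b) monoid_scheme" +
  fixes alpha :: "'h \<Rightarrow> 'k \<Rightarrow> 'k"
  assumes alpha_hom: "alpha \<in> hom H (AutoGroup K)"
begin

abbreviation G where "G \<equiv> semidirect_product K H alpha"

lemma alpha_group_hom: "group_hom H (AutoGroup K) alpha"
  by (simp add: group_hom_def group_hom_axioms_def H.group_axioms K.AutoGroup alpha_hom)

lemma alpha_auto [simp]: "h \<in> carrier H \<Longrightarrow> alpha h \<in> auto K"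
  using alpha_hom by (auto simp: hom_def)

lemma alpha_mult:
  assumes "h1 \<in> carrier H" "h2 \<in> carrier H" "x \<in> carrier K"
  shows "alpha (h1 \<otimes>\<^bsub>H\<^esub> h2) x = alpha h1 (alpha h2 x)"
  using assms group_hom.hom_mult[OF alpha_group_hom] by simp

lemma alpha_one [simp]: "x \<in> carrier K \<Longrightarrow> alpha \<one>\<^bsub>H\<^esub> x = x"
  using group_hom.hom_one[OF alpha_group_hom] by (simp add: AutoGroup_def BijGroup_def)

lemma alpha_inv_cancel:
  "h \<in> carrier H \<Longrightarrow> x \<in> carrier K \<Longrightarrow> alpha (inv\<^bsub>H\<^esub> h) (alpha h x) = x"
  using alpha_mult[of "inv\<^bsub>H\<^esub> h" h x] by simp

lemma carrier_G [simp]: "carrier G = carrier K \<times> carrier H"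
  by (simp add: semidirect_product_def)

lemma mult_G [simp]: "(k1, h1) \<otimes>\<^bsub>G\<^esub> (k2, h2) = (k1 \<otimes>\<^bsub>K\<^esub> alpha h1 k2, h1 \<otimes>\<^bsub>H\<^esub> h2)"
  by (simp add: semidirect_product_def)

lemma one_G [simp]: "\<one>\<^bsub>G\<^esub> = (\<one>\<^bsub>K\<^esub>, \<one>\<^bsub>H\<^esub>)"
  by (simp add: semidirect_product_def)

lemma l_inv_G:
  "k \<in> carrier K \<Longrightarrow> h \<in> carrier H \<Longrightarrow>
   (alpha (inv\<^bsub>H\<^esub> h) (inv\<^bsub>K\<^esub> k), inv\<^bsub>H\<^esub> h) \<otimes>\<^bsub>G\<^esub> (k, h) = \<one>\<^bsub>G\<^esub>"
  using K.auto_mult[of "alpha (inv\<^bsub>H\<^esub> h)" "inv\<^bsub>K\<^esub> k" k, symmetric] by simp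

lemma group_G: "group G"
proof (rule groupI)
  fix x y z
  assume "x \<in> carrier G" "y \<in> carrier G" "z \<in> carrier G"
  then show "x \<otimes>\<^bsub>G\<^esub> y \<otimes>\<^bsub>G\<^esub> z = x \<otimes>\<^bsub>G\<^esub> (y \<otimes>\<^bsub>G\<^esub> z)"
    by (cases x, cases y, cases z) (simp add: alpha_mult K.m_assoc H.m_assoc)
next
  fix x
  assume "x \<in> carrier G"
  then obtain k h where x: "x = (k, h)" "k \<in> carrier K" "h \<in> carrier H"
    by auto
  then have "(alpha (inv\<^bsub>H\<^esub> h) (inv\<^bsub>K\<^esub> k), inv\<^bsub>H\<^esub> h) \<in> carrier G"
    by simp
  with x show "\<exists>y\<in>carrier G. y \<otimes>\<^bsub>G\<^esub> x = \<one>\<^bsub>G\<^esub>"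
    using l_inv_G by blast
qed auto

lemma inv_G [simp]:
  "k \<in> carrier K \<Longrightarrow> h \<in> carrier H \<Longrightarrow>
   inv\<^bsub>G\<^esub> (k, h) = (alpha (inv\<^bsub>H\<^esub> h) (inv\<^bsub>K\<^esub> k), inv\<^bsub>H\<^esub> h)"
  using l_inv_G by (intro group.inv_equality[OF group_G]) auto

lemma snd_pow_G: "snd (g [^]\<^bsub>G\<^esub> (n::nat)) = snd g [^]\<^bsub>H\<^esub> n"
  by (induction n) (auto simp: case_prod_unfold semidirect_product_def)

lemma pow_G_K: "x \<in> carrier K \<Longrightarrow> (x, \<one>\<^bsub>H\<^esub>) [^]\<^bsub>G\<^esub> (n::nat) = (x [^]\<^bsub>K\<^esub> n, \<one>\<^bsub>H\<^esub>)"
  by (induction n) simp_all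

end

lemma (in semidirect) subgroup_carrier_times:
  assumes S: "subgroup S H"
  shows "subgroup (carrier K \<times> S) G"
proof (rule subgroup.intro)
  show "carrier K \<times> S \<subseteq> carrier G"
    using subgroup.subset[OF S] by auto
  show "\<one>\<^bsub>G\<^esub> \<in> carrier K \<times> S"
    using subgroup.one_closed[OF S] by simp
  fix x y
  assume x: "x \<in> carrier K \<times> S" and y: "y \<in> carrier K \<times> S"
  then show "x \<otimes>\<^bsub>G\<^esub> y \<in> carrier K \<times> S"
    using subgroup.subset[OF S] subgroup.m_closed[OF S] by (cases x, cases y) auto
  from x show "inv\<^bsub>G\<^esub> x \<in> carrier K \<times> S"
    using subgroup.subset[OF S] subgroup.m_inv_closed[OF S] by (cases x) auto
qed

lemma (in group) semidirect_AutoGroup_subgroup: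
  assumes "subgroup S (AutoGroup G)"
  shows "semidirect G ((AutoGroup G)\<lparr>carrier := S\<rparr>) (\<lambda>a. a)"
  using subgroup.subset[OF assms]
  by (intro semidirect.intro semidirect_axioms.intro group_axioms
      subgroup.subgroup_is_group[OF assms AutoGroup]) (auto simp: hom_def)

lemma (in group) semidirect_AutoGroup: "semidirect G (AutoGroup G) (\<lambda>a. a)"
  by (intro semidirect.intro semidirect_axioms.intro group_axioms AutoGroup) (auto simp: hom_def)

lemma (in group) subgroup_holomorph:
  assumes "subgroup S (AutoGroup G)"
  shows "subgroup (carrier G \<times> S) (holomorph G)"
  unfolding holomorph_def
  using semidirect.subgroup_carrier_times[OF semidirect_AutoGroup assms] .

section \<open>Frobenius groups with abelian kernel\<close>

locale abelian_frobenius = semidirect K H phi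
  for K :: "('k, 'a) monoid_scheme" and H :: "('h, 'b) monoid_scheme" and phi +
  assumes K_comm: "comm_group K"
    and finite_K: "finite (carrier K)" and finite_H: "finite (carrier H)"
    and frobenius: "frobenius_action K H phi"
begin

sublocale KC: comm_group K
  by (rule K_comm)

lemma phi_fixpoint_free:
  "h \<in> carrier H \<Longrightarrow> h \<noteq> \<one>\<^bsub>H\<^esub> \<Longrightarrow> x \<in> carrier K \<Longrightarrow> phi h x = x \<Longrightarrow> x = \<one>\<^bsub>K\<^esub>"
  using frobenius by (auto simp: frobenius_action_def)

lemma K_nontrivial: "\<exists>x\<in>carrier K. x \<noteq> \<one>\<^bsub>K\<^esub>"
  using frobenius K.one_closed by (auto simp: frobenius_action_def)

lemma H_nontrivial: "\<exists>h\<in>carrier H. h \<noteq> \<one>\<^bsub>H\<^esub>"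
  using frobenius H.one_closed by (auto simp: frobenius_action_def)

lemma phi_eq_at_nonone:
  assumes "h1 \<in> carrier H" "h2 \<in> carrier H" "x \<in> carrier K" "x \<noteq> \<one>\<^bsub>K\<^esub>"
    and "phi h1 x = phi h2 x"
  shows "h1 = h2"
proof -
  let ?g = "inv\<^bsub>H\<^esub> h2 \<otimes>\<^bsub>H\<^esub> h1"
  have "phi ?g x = phi (inv\<^bsub>H\<^esub> h2) (phi h2 x)"
    using assms by (simp add: alpha_mult)
  also have "\<dots> = x"
    using assms by (simp add: alpha_inv_cancel)
  finally have "?g = \<one>\<^bsub>H\<^esub>"
    using phi_fixpoint_free assms by blast
  then have "h1 = h2 \<otimes>\<^bsub>H\<^esub> \<one>\<^bsub>H\<^esub>"
    using H.inv_solve_left[of "\<one>\<^bsub>H\<^esub>" h2 h1] assms(1,2) by simp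
  then show ?thesis
    using assms(2) by simp
qed

lemma phi_eqI:
  assumes "h1 \<in> carrier H" "h2 \<in> carrier H" "\<And>x. x \<in> carrier K \<Longrightarrow> phi h1 x = phi h2 x"
  shows "h1 = h2"
  using K_nontrivial assms phi_eq_at_nonone by blast

definition orbit :: "'k \<Rightarrow> 'k set" where
  "orbit x = (\<lambda>h. phi h x) ` carrier H"

lemma orbit_subset: "x \<in> carrier K - {\<one>\<^bsub>K\<^esub>} \<Longrightarrow> orbit x \<subseteq> carrier K - {\<one>\<^bsub>K\<^esub>}"
proof
  fix y
  assume x: "x \<in> carrier K - {\<one>\<^bsub>K\<^esub>}" and "y \<in> orbit x"
  then obtain h where h: "h \<in> carrier H" "y = phi h x"
    by (auto simp: orbit_def)
  have "phi h x \<noteq> phi h \<one>\<^bsub>K\<^esub>"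
    using K.auto_inj[OF alpha_auto[OF h(1)], of x "\<one>\<^bsub>K\<^esub>"] x by auto
  with x h show "y \<in> carrier K - {\<one>\<^bsub>K\<^esub>}"
    by simp
qed

lemma card_orbit: "x \<in> carrier K - {\<one>\<^bsub>K\<^esub>} \<Longrightarrow> card (orbit x) = card (carrier H)"
  unfolding orbit_def by (rule card_image) (auto intro: inj_onI phi_eq_at_nonone)

lemma mem_orbit: "x \<in> carrier K \<Longrightarrow> x \<in> orbit x"
  unfolding orbit_def by (rule image_eqI[of _ _ "\<one>\<^bsub>H\<^esub>"]) simp_all

lemma orbit_eq:
  assumes "x \<in> carrier K" "y \<in> orbit x"
  shows "orbit y = orbit x"
proof -
  obtain g where g: "g \<in> carrier H" "y = phi g x"
    using assms by (auto simp: orbit_def)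
  have "orbit y = (\<lambda>h. phi (h \<otimes>\<^bsub>H\<^esub> g) x) ` carrier H"
    unfolding orbit_def using g assms by (auto simp: alpha_mult)
  also have "\<dots> = (\<lambda>h. phi h x) ` ((\<lambda>h. h \<otimes>\<^bsub>H\<^esub> g) ` carrier H)"
    by auto
  also have "(\<lambda>h. h \<otimes>\<^bsub>H\<^esub> g) ` carrier H = carrier H"
    using H.surj_const_mult_right[OF g(1)] .
  finally show ?thesis
    by (simp add: orbit_def)
qed

text \<open>The orbits of \<open>H\<close> on the nonidentity elements of \<open>K\<close> are regular.\<close>
lemma card_H_dvd: "card (carrier H) dvd card (carrier K) - 1"
proof -
  let ?X = "carrier K - {\<one>\<^bsub>K\<^esub>}"
  let ?C = "orbit ` ?X"
  have U: "\<Union>?C = ?X"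
    using orbit_subset mem_orbit by blast
  have "card (carrier H) * card ?C = card (\<Union>?C)"
  proof (rule card_partition)
    show "finite ?C" "finite (\<Union>?C)"
      using U finite_K by simp_all
    show "\<And>c. c \<in> ?C \<Longrightarrow> card c = card (carrier H)"
      using card_orbit by blast
    show "c1 \<inter> c2 = {}" if c: "c1 \<in> ?C" "c2 \<in> ?C" "c1 \<noteq> c2" for c1 c2
    proof -
      obtain x y where "x \<in> ?X" "y \<in> ?X" "c1 = orbit x" "c2 = orbit y"
        using c(1,2) by blast
      then show ?thesis
        using c(3) orbit_eq by blast
    qed
  qed
  also have "\<dots> = card (carrier K) - 1"
    using U finite_K by (simp add: card_Diff_singleton)
  finally show ?thesis
    by (metis dvd_triv_left)
qed

definition orbit_count :: nat where
  "orbit_count = (card (carrier K) - 1) div card (carrier H)"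

lemma card_K_eq: "card (carrier K) = Suc (orbit_count * card (carrier H))"
proof -
  have "card (carrier K) > 0"
    using finite_K K.one_closed card_gt_0_iff by blast
  moreover have "orbit_count * card (carrier H) = card (carrier K) - 1"
    unfolding orbit_count_def using card_H_dvd by (rule dvd_div_mult_self)
  ultimately show ?thesis
    by linarith
qed

lemma H_pow_card_K_eq_one:
  assumes "h \<in> carrier H" "h [^]\<^bsub>H\<^esub> card (carrier K) = \<one>\<^bsub>H\<^esub>"
  shows "h = \<one>\<^bsub>H\<^esub>"
proof -
  have "h [^]\<^bsub>H\<^esub> (card (carrier H) * orbit_count) = \<one>\<^bsub>H\<^esub>"
    using assms H.pow_order_eq_1 by (simp add: H.nat_pow_pow[symmetric] order_def)
  with assms show ?thesis
    by (simp add: card_K_eq mult.commute)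
qed

lemma K_inv_pow_card_H:
  assumes "x \<in> carrier K"
  shows "inv\<^bsub>K\<^esub> (x [^]\<^bsub>K\<^esub> (card (carrier H) * orbit_count)) = x"
proof -
  have "x [^]\<^bsub>K\<^esub> (card (carrier H) * orbit_count) \<otimes>\<^bsub>K\<^esub> x = \<one>\<^bsub>K\<^esub>"
    using K.pow_order_eq_1[OF assms] card_K_eq by (simp add: order_def mult.commute)
  then show ?thesis
    using assms by (intro K.inv_equality) (simp_all add: KC.m_comm)
qed

subsection \<open>The normalizer of the complement\<close>

abbreviation N where "N \<equiv> normalizer (AutoGroup K) (phi ` carrier H)"

definition intertwines :: "('k \<Rightarrow> 'k) \<Rightarrow> 'h \<Rightarrow> 'h \<Rightarrow> bool" where
  "intertwines a h h' \<longleftrightarrow> (\<forall>x\<in>carrier K. phi h' (a x) = a (phi h x))"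

lemma conj_phi_eq_iff:
  assumes a: "a \<in> auto K" and h: "h \<in> carrier H" "h' \<in> carrier H"
  shows "a \<otimes>\<^bsub>AutoGroup K\<^esub> phi h \<otimes>\<^bsub>AutoGroup K\<^esub> inv\<^bsub>AutoGroup K\<^esub> a = phi h'
    \<longleftrightarrow> intertwines a h h'"
    (is "?c = phi h' \<longleftrightarrow> _")
proof
  assume c: "?c = phi h'"
  show "intertwines a h h'"
    unfolding intertwines_def
  proof
    fix x
    assume x: "x \<in> carrier K"
    have "phi h' (a x) = ?c (a x)"
      using c by simp
    also have "\<dots> = a (phi h x)"
      using a h x by simp
    finally show "phi h' (a x) = a (phi h x)" .
  qed
next
  assume i: "intertwines a h h'"
  show "?c = phi h'"
  proof (rule K.auto_eqI)
    fix y
    assume y: "y \<in> carrier K"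
    have "?c y = a (phi h ((inv\<^bsub>AutoGroup K\<^esub> a) y))"
      using a h y by simp
    also have "\<dots> = phi h' (a ((inv\<^bsub>AutoGroup K\<^esub> a) y))"
      using i a y unfolding intertwines_def by (metis K.AutoGroup_inv_closed K.auto_closed)
    also have "\<dots> = phi h' y"
      using a y by simp
    finally show "?c y = phi h' y" .
  qed (use a h in simp_all)
qed

lemma mem_normalizer_iff:
  "a \<in> N \<longleftrightarrow> a \<in> auto K
     \<and> (\<forall>h\<in>carrier H. \<exists>h'\<in>carrier H. intertwines a h h')
     \<and> (\<forall>h'\<in>carrier H. \<exists>h\<in>carrier H. intertwines a h h')"
proof (cases "a \<in> auto K")
  case True
  have "a \<in> N \<longleftrightarrow>
      (\<lambda>p. a \<otimes>\<^bsub>AutoGroup K\<^esub> p \<otimes>\<^bsub>AutoGroup K\<^esub> inv\<^bsub>AutoGroup K\<^esub> a) ` phi ` carrier H = phi ` carrier H"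
    using True unfolding normalizer_def stabilizer_def l_coset_def r_coset_def
    by (auto simp: image_image)
  with True show ?thesis
    by (simp add: image_image_eq_iff conj_phi_eq_iff)
qed (simp add: normalizer_def stabilizer_def)

lemma normalizer_auto: "a \<in> N \<Longrightarrow> a \<in> auto K"
  using mem_normalizer_iff by blast

lemma normalizer_subgroup: "subgroup N (AutoGroup K)"
  by (rule group.normalizer_imp_subgroup[OF K.AutoGroup]) auto

lemma intertwines_unique:
  assumes "a \<in> auto K" "h1 \<in> carrier H" "h2 \<in> carrier H"
    and "intertwines a h h1" "intertwines a h h2"
  shows "h1 = h2"
proof (rule phi_eqI[OF assms(2,3)])
  fix y
  assume "y \<in> carrier K"
  then obtain x where "x \<in> carrier K" "y = a x"
    using K.auto_surj[OF assms(1)] by blast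
  with assms(4,5) show "phi h1 y = phi h2 y"
    by (simp add: intertwines_def)
qed

text \<open>\<open>phi (conj_H a h) = a \<circ> phi h \<circ> a\<inverse>\<close>; this determines \<open>conj_H a h\<close> because \<open>phi\<close> is
  injective by fixed-point-freeness.\<close>
definition conj_H :: "('k \<Rightarrow> 'k) \<Rightarrow> 'h \<Rightarrow> 'h" where
  "conj_H a h = (THE h'. h' \<in> carrier H \<and> intertwines a h h')"

lemma conj_H:
  assumes "a \<in> N" "h \<in> carrier H"
  shows "conj_H a h \<in> carrier H \<and> intertwines a h (conj_H a h)"
proof -
  obtain h' where h': "h' \<in> carrier H" "intertwines a h h'"
    using assms mem_normalizer_iff by blast
  then have "conj_H a h = h'"
    unfolding conj_H_def using intertwines_unique normalizer_auto[OF assms(1)] by blast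
  with h' show ?thesis
    by simp
qed

lemma conj_H_closed [simp]: "a \<in> N \<Longrightarrow> h \<in> carrier H \<Longrightarrow> conj_H a h \<in> carrier H"
  using conj_H by blast

lemma phi_conj_H:
  "a \<in> N \<Longrightarrow> h \<in> carrier H \<Longrightarrow> x \<in> carrier K \<Longrightarrow> phi (conj_H a h) (a x) = a (phi h x)"
  using conj_H intertwines_def by blast

lemma conj_H_eqI:
  "a \<in> N \<Longrightarrow> h \<in> carrier H \<Longrightarrow> h' \<in> carrier H \<Longrightarrow> intertwines a h h' \<Longrightarrow> conj_H a h = h'"
  using conj_H intertwines_unique normalizer_auto by blast

lemma conj_H_mult:
  "a \<in> N \<Longrightarrow> h1 \<in> carrier H \<Longrightarrow> h2 \<in> carrier H \<Longrightarrow>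
   conj_H a (h1 \<otimes>\<^bsub>H\<^esub> h2) = conj_H a h1 \<otimes>\<^bsub>H\<^esub> conj_H a h2"
  by (intro conj_H_eqI) (auto simp: intertwines_def alpha_mult phi_conj_H normalizer_auto)

lemma conj_H_one: "a \<in> N \<Longrightarrow> conj_H a \<one>\<^bsub>H\<^esub> = \<one>\<^bsub>H\<^esub>"
  by (intro conj_H_eqI) (auto simp: intertwines_def normalizer_auto)

lemma conj_H_inj:
  assumes a: "a \<in> N" and h: "h1 \<in> carrier H" "h2 \<in> carrier H"
    and eq: "conj_H a h1 = conj_H a h2"
  shows "h1 = h2"
proof (rule phi_eqI[OF h])
  fix x
  assume x: "x \<in> carrier K"
  have "a (phi h1 x) = a (phi h2 x)"
    using phi_conj_H[OF a h(1) x] phi_conj_H[OF a h(2) x] eq by simp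
  then show "phi h1 x = phi h2 x"
    using K.auto_inj[OF normalizer_auto[OF a]] x h by simp
qed

lemma conj_H_AutoGroup_mult:
  assumes a: "a \<in> N" and b: "b \<in> N" and h: "h \<in> carrier H"
  shows "conj_H (a \<otimes>\<^bsub>AutoGroup K\<^esub> b) h = conj_H a (conj_H b h)"
proof (rule conj_H_eqI)
  show "a \<otimes>\<^bsub>AutoGroup K\<^esub> b \<in> N"
    using subgroup.m_closed[OF normalizer_subgroup a b] .
  show "intertwines (a \<otimes>\<^bsub>AutoGroup K\<^esub> b) h (conj_H a (conj_H b h))"
    using a b h normalizer_auto[OF a] normalizer_auto[OF b]
    by (auto simp: intertwines_def phi_conj_H)
qed (use a b h in simp_all)

subsection \<open>Automorphisms induced by \<open>K \<rtimes> N\<close>\<close>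

lemma phi_commutator_inj:
  assumes s: "s \<in> carrier H" "s \<noteq> \<one>\<^bsub>H\<^esub>" and k: "k1 \<in> carrier K" "k2 \<in> carrier K"
    and eq: "k1 \<otimes>\<^bsub>K\<^esub> phi s (inv\<^bsub>K\<^esub> k1) = k2 \<otimes>\<^bsub>K\<^esub> phi s (inv\<^bsub>K\<^esub> k2)"
  shows "k1 = k2"
proof -
  define d where "d = k1 \<otimes>\<^bsub>K\<^esub> inv\<^bsub>K\<^esub> k2"
  have d: "d \<in> carrier K"
    using k by (simp add: d_def)
  have "k1 \<otimes>\<^bsub>K\<^esub> inv\<^bsub>K\<^esub> (phi s k1) = k2 \<otimes>\<^bsub>K\<^esub> inv\<^bsub>K\<^esub> (phi s k2)"
    using eq k s by simp
  then have "d = phi s k1 \<otimes>\<^bsub>K\<^esub> inv\<^bsub>K\<^esub> (phi s k2)"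
    unfolding d_def by (rule KC.inv_swap[rotated 4]) (use k s in simp_all)
  also have "\<dots> = phi s d"
    using k s by (simp add: d_def)
  finally have "phi s d = d" ..
  then have "k1 \<otimes>\<^bsub>K\<^esub> inv\<^bsub>K\<^esub> k2 = \<one>\<^bsub>K\<^esub>"
    using phi_fixpoint_free[OF s d] by (simp add: d_def)
  then have "inv\<^bsub>K\<^esub> (inv\<^bsub>K\<^esub> k2) = k1"
    using k by (intro K.inv_equality) simp_all
  then show ?thesis
    using k by simp
qed

text \<open>\<open>induced_aut (k, a)\<close> is \<open>(x, h) \<mapsto> (a x, conj_H a h)\<close> followed by conjugation
  with \<open>(k, \<one>)\<close>.\<close>
definition induced_aut :: "'k \<times> ('k \<Rightarrow> 'k) \<Rightarrow> 'k \<times> 'h \<Rightarrow> 'k \<times> 'h" where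
  "induced_aut ka = (\<lambda>g\<in>carrier K \<times> carrier H.
     (fst ka \<otimes>\<^bsub>K\<^esub> snd ka (fst g) \<otimes>\<^bsub>K\<^esub> phi (conj_H (snd ka) (snd g)) (inv\<^bsub>K\<^esub> (fst ka)),
      conj_H (snd ka) (snd g)))"

lemma induced_aut_apply [simp]:
  "x \<in> carrier K \<Longrightarrow> h \<in> carrier H \<Longrightarrow>
   induced_aut (k, a) (x, h) = (k \<otimes>\<^bsub>K\<^esub> a x \<otimes>\<^bsub>K\<^esub> phi (conj_H a h) (inv\<^bsub>K\<^esub> k), conj_H a h)"
  by (simp add: induced_aut_def)

lemma induced_aut_closed:
  "k \<in> carrier K \<Longrightarrow> a \<in> N \<Longrightarrow> g \<in> carrier G \<Longrightarrow> induced_aut (k, a) g \<in> carrier G"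
  using normalizer_auto by (cases g) simp

lemma induced_aut_on_K:
  assumes k: "k \<in> carrier K" and a: "a \<in> N" and x: "x \<in> carrier K"
  shows "induced_aut (k, a) (x, \<one>\<^bsub>H\<^esub>) = (a x, \<one>\<^bsub>H\<^esub>)"
proof -
  have "k \<otimes>\<^bsub>K\<^esub> a x \<otimes>\<^bsub>K\<^esub> inv\<^bsub>K\<^esub> k = a x"
    using k x normalizer_auto[OF a] KC.m_comm[of k "a x"] by (simp add: K.m_assoc)
  then show ?thesis
    using k x by (simp add: conj_H_one[OF a] del: K.auto_inv)
qed

lemma inj_on_induced_aut_at:
  assumes k: "k \<in> carrier K" and a: "a \<in> N"
  shows "inj_on (induced_aut (k, a)) (carrier G)"
proof (rule inj_onI)
  fix g1 g2
  assume "g1 \<in> carrier G" "g2 \<in> carrier G" and eq: "induced_aut (k, a) g1 = induced_aut (k, a) g2"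
  then obtain x1 h1 x2 h2 where g: "g1 = (x1, h1)" "g2 = (x2, h2)"
    "x1 \<in> carrier K" "x2 \<in> carrier K" "h1 \<in> carrier H" "h2 \<in> carrier H"
    by auto
  have h: "h1 = h2"
    using eq g conj_H_inj[OF a g(5,6)] by simp
  have "k \<otimes>\<^bsub>K\<^esub> a x1 \<otimes>\<^bsub>K\<^esub> phi (conj_H a h1) (inv\<^bsub>K\<^esub> k)
      = k \<otimes>\<^bsub>K\<^esub> a x2 \<otimes>\<^bsub>K\<^esub> phi (conj_H a h1) (inv\<^bsub>K\<^esub> k)"
    using eq g h by simp
  then have "a x1 = a x2"
    using k a g normalizer_auto[OF a] by (simp add: K.m_assoc del: K.auto_inv)
  then have "x1 = x2"
    using K.auto_inj[OF normalizer_auto[OF a]] g by blast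
  with g h show "g1 = g2"
    by simp
qed

lemma induced_aut_hom:
  assumes k: "k \<in> carrier K" and a: "a \<in> N"
  shows "induced_aut (k, a) \<in> hom G G"
proof (rule homI)
  fix g1 g2
  assume "g1 \<in> carrier G" "g2 \<in> carrier G"
  then obtain x1 h1 x2 h2 where g: "g1 = (x1, h1)" "g2 = (x2, h2)"
    "x1 \<in> carrier K" "x2 \<in> carrier K" "h1 \<in> carrier H" "h2 \<in> carrier H"
    by auto
  have au: "a \<in> auto K"
    using normalizer_auto[OF a] .
  define s1 where "s1 = conj_H a h1"
  define s2 where "s2 = conj_H a h2"
  have s: "s1 \<in> carrier H" "s2 \<in> carrier H"
    using a g by (simp_all add: s1_def s2_def)
  have s12: "conj_H a (h1 \<otimes>\<^bsub>H\<^esub> h2) = s1 \<otimes>\<^bsub>H\<^esub> s2"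
    using conj_H_mult[OF a g(5,6)] by (simp add: s1_def s2_def)
  have twist: "a (phi h1 x2) = phi s1 (a x2)"
    using phi_conj_H[OF a g(5,4)] by (simp add: s1_def)
  let ?u = "phi s1 k"
  let ?w = "phi (s1 \<otimes>\<^bsub>H\<^esub> s2) (inv\<^bsub>K\<^esub> k)"
  have cl: "?u \<in> carrier K" "?w \<in> carrier K" "a x1 \<in> carrier K" "phi s1 (a x2) \<in> carrier K"
    using s k au g by auto
  have "fst (induced_aut (k, a) g1 \<otimes>\<^bsub>G\<^esub> induced_aut (k, a) g2)
      = (k \<otimes>\<^bsub>K\<^esub> a x1 \<otimes>\<^bsub>K\<^esub> phi s1 (inv\<^bsub>K\<^esub> k))
        \<otimes>\<^bsub>K\<^esub> phi s1 (k \<otimes>\<^bsub>K\<^esub> a x2 \<otimes>\<^bsub>K\<^esub> phi s2 (inv\<^bsub>K\<^esub> k))"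
    using g by (simp add: s1_def s2_def)
  also have "\<dots> = (k \<otimes>\<^bsub>K\<^esub> a x1 \<otimes>\<^bsub>K\<^esub> inv\<^bsub>K\<^esub> ?u) \<otimes>\<^bsub>K\<^esub> (?u \<otimes>\<^bsub>K\<^esub> (phi s1 (a x2) \<otimes>\<^bsub>K\<^esub> ?w))"
    using s k au g by (simp add: alpha_mult K.m_assoc)
  also have "\<dots> = k \<otimes>\<^bsub>K\<^esub> a x1 \<otimes>\<^bsub>K\<^esub> (phi s1 (a x2) \<otimes>\<^bsub>K\<^esub> ?w)"
    using cl k by (simp add: K.inv_cancel_middle)
  also have "\<dots> = fst (induced_aut (k, a) (g1 \<otimes>\<^bsub>G\<^esub> g2))"
    using g au s12 twist cl k by (simp add: K.m_assoc)
  finally have fst_eq: "fst (induced_aut (k, a) g1 \<otimes>\<^bsub>G\<^esub> induced_aut (k, a) g2)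
      = fst (induced_aut (k, a) (g1 \<otimes>\<^bsub>G\<^esub> g2))" .
  have snd_eq: "snd (induced_aut (k, a) (g1 \<otimes>\<^bsub>G\<^esub> g2))
      = snd (induced_aut (k, a) g1 \<otimes>\<^bsub>G\<^esub> induced_aut (k, a) g2)"
    using g s12 by (simp add: s1_def s2_def)
  show "induced_aut (k, a) (g1 \<otimes>\<^bsub>G\<^esub> g2)
      = induced_aut (k, a) g1 \<otimes>\<^bsub>G\<^esub> induced_aut (k, a) g2"
    using fst_eq snd_eq by (simp add: prod_eq_iff)
qed (use induced_aut_closed k a in blast)

lemma induced_aut_auto:
  assumes k: "k \<in> carrier K" and a: "a \<in> N"
  shows "induced_aut (k, a) \<in> auto G"
proof -
  have "induced_aut (k, a) ` carrier G = carrier G"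
    using finite_K finite_H induced_aut_closed[OF k a] inj_on_induced_aut_at[OF k a]
    by (intro endo_inj_surj) auto
  then have "induced_aut (k, a) \<in> Bij (carrier G)"
    using inj_on_induced_aut_at[OF k a]
    by (simp add: Bij_def bij_betw_def induced_aut_def)
  then show ?thesis
    using induced_aut_hom[OF k a] by (simp add: auto_def)
qed

sublocale KN: semidirect K "(AutoGroup K)\<lparr>carrier := N\<rparr>" "\<lambda>a. a"
  by (rule K.semidirect_AutoGroup_subgroup[OF normalizer_subgroup])

lemma induced_aut_mult:
  assumes k: "k1 \<in> carrier K" "k2 \<in> carrier K" and a: "a1 \<in> N" "a2 \<in> N"
  shows "induced_aut ((k1, a1) \<otimes>\<^bsub>KN.G\<^esub> (k2, a2))
    = induced_aut (k1, a1) \<otimes>\<^bsub>AutoGroup G\<^esub> induced_aut (k2, a2)"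
proof -
  have au: "a1 \<in> auto K" "a2 \<in> auto K"
    using normalizer_auto a by auto
  have "induced_aut (k1, a1) \<otimes>\<^bsub>AutoGroup G\<^esub> induced_aut (k2, a2)
      = compose (carrier G) (induced_aut (k1, a1)) (induced_aut (k2, a2))"
    using AutoGroup_mult induced_aut_auto k a by blast
  also have "\<dots> = induced_aut ((k1, a1) \<otimes>\<^bsub>KN.G\<^esub> (k2, a2))"
  proof (rule extensionalityI[of _ "carrier G"])
    fix g
    assume "g \<in> carrier G"
    then obtain x h where g: "g = (x, h)" "x \<in> carrier K" "h \<in> carrier H"
      by auto
    define s2 where "s2 = conj_H a2 h"
    define s where "s = conj_H a1 s2"
    have s: "s2 \<in> carrier H" "s \<in> carrier H"
      using a g by (simp_all add: s_def s2_def)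
    have conj: "conj_H (a1 \<otimes>\<^bsub>AutoGroup K\<^esub> a2) h = s"
      using conj_H_AutoGroup_mult[OF a g(3)] by (simp add: s_def s2_def)
    have twist: "a1 (phi s2 k2) = phi s (a1 k2)"
      using phi_conj_H[OF a(1) s(1) k(2)] by (simp add: s_def)
    show "compose (carrier G) (induced_aut (k1, a1)) (induced_aut (k2, a2)) g
        = induced_aut ((k1, a1) \<otimes>\<^bsub>KN.G\<^esub> (k2, a2)) g"
      using g k au s conj twist
      by (simp add: compose_def s2_def [symmetric] s_def [symmetric] KC.m_ac KC.inv_mult)
  qed (auto simp: compose_def induced_aut_def)
  finally show ?thesis
    by simp
qed

lemma induced_aut_hom_KN: "induced_aut \<in> hom KN.G (AutoGroup G)"
  using induced_aut_auto induced_aut_mult by (intro homI) auto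

lemma inj_on_induced_aut: "inj_on induced_aut (carrier K \<times> N)"
proof (rule inj_onI)
  fix p q
  assume "p \<in> carrier K \<times> N" "q \<in> carrier K \<times> N" and eq: "induced_aut p = induced_aut q"
  then obtain k1 a1 k2 a2 where pq: "p = (k1, a1)" "q = (k2, a2)"
    and k: "k1 \<in> carrier K" "k2 \<in> carrier K" and a: "a1 \<in> N" "a2 \<in> N"
    by auto
  have "a1 = a2"
  proof (rule K.auto_eqI)
    fix x
    assume x: "x \<in> carrier K"
    have "induced_aut (k1, a1) (x, \<one>\<^bsub>H\<^esub>) = induced_aut (k2, a2) (x, \<one>\<^bsub>H\<^esub>)"
      using eq pq by (simp del: induced_aut_apply)
    then show "a1 x = a2 x"
      unfolding induced_aut_on_K[OF k(1) a(1) x] induced_aut_on_K[OF k(2) a(2) x] by simp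
  qed (use normalizer_auto a in simp_all)
  obtain h where h: "h \<in> carrier H" "h \<noteq> \<one>\<^bsub>H\<^esub>"
    using H_nontrivial by blast
  have s: "conj_H a1 h \<in> carrier H" "conj_H a1 h \<noteq> \<one>\<^bsub>H\<^esub>"
    using h a(1) conj_H_one conj_H_inj[OF a(1) h(1) H.one_closed] by auto
  have "induced_aut (k1, a1) (\<one>\<^bsub>K\<^esub>, h) = induced_aut (k2, a2) (\<one>\<^bsub>K\<^esub>, h)"
    using eq pq by simp
  then have "k1 \<otimes>\<^bsub>K\<^esub> phi (conj_H a1 h) (inv\<^bsub>K\<^esub> k1) = k2 \<otimes>\<^bsub>K\<^esub> phi (conj_H a1 h) (inv\<^bsub>K\<^esub> k2)"
    using h k normalizer_auto[OF a(1)] \<open>a1 = a2\<close> by (simp del: K.auto_inv)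
  then have "k1 = k2"
    using phi_commutator_inj[OF s k] by simp
  with pq \<open>a1 = a2\<close> show "p = q"
    by simp
qed

end

subsection \<open>Every automorphism is induced\<close>

locale abelian_frobenius_aut = abelian_frobenius K H phi
  for K :: "('k, 'a) monoid_scheme" and H :: "('h, 'b) monoid_scheme" and phi +
  fixes theta :: "'k \<times> 'h \<Rightarrow> 'k \<times> 'h"
  assumes theta_auto: "theta \<in> auto G"
begin

lemma theta_group_hom: "group_hom G G theta"
  using theta_auto group_G by (simp add: group_hom_def group_hom_axioms_def auto_def)

lemma theta_closed: "g \<in> carrier G \<Longrightarrow> theta g \<in> carrier G"
  using group_hom.hom_closed[OF theta_group_hom] .

lemma theta_mult:
  "g1 \<in> carrier G \<Longrightarrow> g2 \<in> carrier G \<Longrightarrow> theta (g1 \<otimes>\<^bsub>G\<^esub> g2) = theta g1 \<otimes>\<^bsub>G\<^esub> theta g2"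
  using group_hom.hom_mult[OF theta_group_hom] .

lemma theta_extensional: "theta \<in> extensional (carrier G)"
  using theta_auto by (simp add: auto_def Bij_def)

text \<open>\<open>(x, \<one>)\<close> has order dividing \<open>|K|\<close>, hence so does the \<open>H\<close>-component of its image,
  which is therefore trivial as \<open>|K| \<equiv> 1 (mod |H|)\<close>.\<close>
lemma theta_K_in_K:
  assumes x: "x \<in> carrier K"
  shows "snd (theta (x, \<one>\<^bsub>H\<^esub>)) = \<one>\<^bsub>H\<^esub>"
proof (rule H_pow_card_K_eq_one)
  have "theta (x, \<one>\<^bsub>H\<^esub>) [^]\<^bsub>G\<^esub> card (carrier K) = theta ((x, \<one>\<^bsub>H\<^esub>) [^]\<^bsub>G\<^esub> card (carrier K))"
    using group_hom.hom_nat_pow[OF theta_group_hom] x by simp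
  also have "\<dots> = \<one>\<^bsub>G\<^esub>"
    using x K.pow_order_eq_1 group_hom.hom_one[OF theta_group_hom]
    by (simp add: pow_G_K order_def)
  finally show "snd (theta (x, \<one>\<^bsub>H\<^esub>)) [^]\<^bsub>H\<^esub> card (carrier K) = \<one>\<^bsub>H\<^esub>"
    by (simp add: snd_pow_G [symmetric])
  show "snd (theta (x, \<one>\<^bsub>H\<^esub>)) \<in> carrier H"
    using theta_closed[of "(x, \<one>\<^bsub>H\<^esub>)"] x by auto
qed

definition beta :: "'k \<Rightarrow> 'k" where
  "beta = (\<lambda>x\<in>carrier K. fst (theta (x, \<one>\<^bsub>H\<^esub>)))"

definition cocycle :: "'h \<Rightarrow> 'k" where
  "cocycle h = fst (theta (\<one>\<^bsub>K\<^esub>, h))"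

definition tau :: "'h \<Rightarrow> 'h" where
  "tau h = snd (theta (\<one>\<^bsub>K\<^esub>, h))"

lemma theta_on_K: "x \<in> carrier K \<Longrightarrow> theta (x, \<one>\<^bsub>H\<^esub>) = (beta x, \<one>\<^bsub>H\<^esub>)"
  using theta_K_in_K by (simp add: beta_def prod_eq_iff)

lemma theta_on_H: "theta (\<one>\<^bsub>K\<^esub>, h) = (cocycle h, tau h)"
  by (simp add: cocycle_def tau_def)

lemma beta_closed: "x \<in> carrier K \<Longrightarrow> beta x \<in> carrier K"
  using theta_closed[of "(x, \<one>\<^bsub>H\<^esub>)"] theta_on_K[of x] by simp

lemma cocycle_closed: "h \<in> carrier H \<Longrightarrow> cocycle h \<in> carrier K"
  using theta_closed[of "(\<one>\<^bsub>K\<^esub>, h)"] by (auto simp: cocycle_def mem_Times_iff)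

lemma tau_closed: "h \<in> carrier H \<Longrightarrow> tau h \<in> carrier H"
  using theta_closed[of "(\<one>\<^bsub>K\<^esub>, h)"] by (auto simp: tau_def mem_Times_iff)

lemma beta_auto: "beta \<in> auto K"
proof -
  have hom: "beta \<in> hom K K"
  proof (rule homI)
    fix x y
    assume xy: "x \<in> carrier K" "y \<in> carrier K"
    have "theta ((x, \<one>\<^bsub>H\<^esub>) \<otimes>\<^bsub>G\<^esub> (y, \<one>\<^bsub>H\<^esub>)) = theta (x, \<one>\<^bsub>H\<^esub>) \<otimes>\<^bsub>G\<^esub> theta (y, \<one>\<^bsub>H\<^esub>)"
      using xy by (intro theta_mult) simp_all
    then show "beta (x \<otimes>\<^bsub>K\<^esub> y) = beta x \<otimes>\<^bsub>K\<^esub> beta y"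
      using xy theta_on_K beta_closed by simp
  qed (rule beta_closed)
  have inj: "inj_on beta (carrier K)"
  proof (rule inj_onI)
    fix x y
    assume xy: "x \<in> carrier K" "y \<in> carrier K" "beta x = beta y"
    then have "theta (x, \<one>\<^bsub>H\<^esub>) = theta (y, \<one>\<^bsub>H\<^esub>)"
      using theta_on_K by simp
    then show "x = y"
      using xy theta_auto by (auto simp: auto_def Bij_def bij_betw_def dest: inj_onD)
  qed
  have "beta ` carrier K = carrier K"
    using endo_inj_surj[OF finite_K _ inj] beta_closed by blast
  with inj have "beta \<in> Bij (carrier K)"
    by (simp add: Bij_def bij_betw_def beta_def)
  with hom show ?thesis
    by (simp add: auto_def)
qed

lemma theta_apply:
  assumes x: "x \<in> carrier K" and h: "h \<in> carrier H"
  shows "theta (x, h) = (beta x \<otimes>\<^bsub>K\<^esub> cocycle h, tau h)"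
proof -
  have "theta ((x, \<one>\<^bsub>H\<^esub>) \<otimes>\<^bsub>G\<^esub> (\<one>\<^bsub>K\<^esub>, h)) = theta (x, \<one>\<^bsub>H\<^esub>) \<otimes>\<^bsub>G\<^esub> theta (\<one>\<^bsub>K\<^esub>, h)"
    using x h by (intro theta_mult) simp_all
  then show ?thesis
    using x h theta_on_K theta_on_H cocycle_closed tau_closed by simp
qed

lemma tau_intertwines: "h \<in> carrier H \<Longrightarrow> intertwines beta h (tau h)"
  unfolding intertwines_def
proof
  fix x
  assume x: "x \<in> carrier K" and h: "h \<in> carrier H"
  have commute: "(\<one>\<^bsub>K\<^esub>, h) \<otimes>\<^bsub>G\<^esub> (x, \<one>\<^bsub>H\<^esub>) = (phi h x, \<one>\<^bsub>H\<^esub>) \<otimes>\<^bsub>G\<^esub> (\<one>\<^bsub>K\<^esub>, h)"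
    using x h by simp
  have "theta (\<one>\<^bsub>K\<^esub>, h) \<otimes>\<^bsub>G\<^esub> theta (x, \<one>\<^bsub>H\<^esub>) = theta ((\<one>\<^bsub>K\<^esub>, h) \<otimes>\<^bsub>G\<^esub> (x, \<one>\<^bsub>H\<^esub>))"
    using x h by (intro theta_mult [symmetric]) simp_all
  also have "\<dots> = theta (phi h x, \<one>\<^bsub>H\<^esub>) \<otimes>\<^bsub>G\<^esub> theta (\<one>\<^bsub>K\<^esub>, h)"
    unfolding commute using x h by (intro theta_mult) simp_all
  finally have "cocycle h \<otimes>\<^bsub>K\<^esub> phi (tau h) (beta x) = cocycle h \<otimes>\<^bsub>K\<^esub> beta (phi h x)"
    using x h theta_on_K theta_on_H cocycle_closed beta_closed KC.m_comm by simp
  then show "phi (tau h) (beta x) = beta (phi h x)"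
    using x h cocycle_closed beta_closed tau_closed by simp
qed

lemma cocycle_identity:
  assumes "h1 \<in> carrier H" "h2 \<in> carrier H"
  shows "tau (h1 \<otimes>\<^bsub>H\<^esub> h2) = tau h1 \<otimes>\<^bsub>H\<^esub> tau h2"
    and "cocycle (h1 \<otimes>\<^bsub>H\<^esub> h2) = cocycle h1 \<otimes>\<^bsub>K\<^esub> phi (tau h1) (cocycle h2)"
proof -
  have "theta ((\<one>\<^bsub>K\<^esub>, h1) \<otimes>\<^bsub>G\<^esub> (\<one>\<^bsub>K\<^esub>, h2)) = theta (\<one>\<^bsub>K\<^esub>, h1) \<otimes>\<^bsub>G\<^esub> theta (\<one>\<^bsub>K\<^esub>, h2)"
    using assms by (intro theta_mult) simp_all
  then have "theta (\<one>\<^bsub>K\<^esub>, h1 \<otimes>\<^bsub>H\<^esub> h2) = (cocycle h1 \<otimes>\<^bsub>K\<^esub> phi (tau h1) (cocycle h2), tau h1 \<otimes>\<^bsub>H\<^esub> tau h2)"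
    using assms by (simp add: theta_on_H)
  then show "tau (h1 \<otimes>\<^bsub>H\<^esub> h2) = tau h1 \<otimes>\<^bsub>H\<^esub> tau h2"
    and "cocycle (h1 \<otimes>\<^bsub>H\<^esub> h2) = cocycle h1 \<otimes>\<^bsub>K\<^esub> phi (tau h1) (cocycle h2)"
    by (simp_all add: theta_on_H)
qed

lemma tau_image: "tau ` carrier H = carrier H"
proof -
  have "inj_on tau (carrier H)"
  proof (rule inj_onI)
    fix h1 h2
    assume h: "h1 \<in> carrier H" "h2 \<in> carrier H" "tau h1 = tau h2"
    show "h1 = h2"
    proof (rule phi_eqI[OF h(1,2)])
      fix x
      assume x: "x \<in> carrier K"
      have "beta (phi h1 x) = beta (phi h2 x)"
        using tau_intertwines[OF h(1)] tau_intertwines[OF h(2)] h(3) x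
        by (simp add: intertwines_def)
      then show "phi h1 x = phi h2 x"
        using K.auto_inj[OF beta_auto] x h by simp
    qed
  qed
  then show ?thesis
    using endo_inj_surj[OF finite_H] tau_closed by blast
qed

lemma beta_normalizer: "beta \<in> N"
  unfolding mem_normalizer_iff
  using beta_auto tau_intertwines tau_closed tau_image by (metis imageE)

lemma conj_H_beta: "h \<in> carrier H \<Longrightarrow> conj_H beta h = tau h"
  using conj_H_eqI[OF beta_normalizer _ tau_closed tau_intertwines] .

text \<open>Multiplying the cocycle identity over all of \<open>H\<close> gives
  \<open>cocycle_prod = (cocycle h)^|H| \<cdot> \<phi>(\<tau> h)(cocycle_prod)\<close>; since \<open>|H|\<close>-th powers are
  invertible on \<open>K\<close>, this exhibits the cocycle as a coboundary.\<close>
definition cocycle_prod :: 'k where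
  "cocycle_prod = finprod K cocycle (carrier H)"

lemma cocycle_prod_closed: "cocycle_prod \<in> carrier K"
  using cocycle_closed by (simp add: cocycle_prod_def Pi_iff)

lemma cocycle_prod_eq:
  assumes h1: "h1 \<in> carrier H"
  shows "cocycle_prod = cocycle h1 [^]\<^bsub>K\<^esub> card (carrier H) \<otimes>\<^bsub>K\<^esub> phi (tau h1) cocycle_prod"
proof -
  have c: "cocycle \<in> carrier H \<rightarrow> carrier K"
    using cocycle_closed by blast
  have "cocycle_prod = finprod K cocycle ((\<lambda>h2. h1 \<otimes>\<^bsub>H\<^esub> h2) ` carrier H)"
    by (simp add: cocycle_prod_def H.surj_const_mult[OF h1])
  also have "\<dots> = finprod K (\<lambda>h2. cocycle (h1 \<otimes>\<^bsub>H\<^esub> h2)) (carrier H)"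
    using c h1 by (subst KC.finprod_reindex) (auto intro: inj_onI)
  also have "\<dots> = finprod K (\<lambda>h2. cocycle h1 \<otimes>\<^bsub>K\<^esub> phi (tau h1) (cocycle h2)) (carrier H)"
    using h1 cocycle_identity(2) cocycle_closed tau_closed by (intro KC.finprod_cong') auto
  also have "\<dots> = finprod K (\<lambda>h2. cocycle h1) (carrier H)
      \<otimes>\<^bsub>K\<^esub> finprod K (\<lambda>h2. phi (tau h1) (cocycle h2)) (carrier H)"
    using h1 cocycle_closed tau_closed by (intro KC.finprod_multf) auto
  also have "\<dots> = cocycle h1 [^]\<^bsub>K\<^esub> card (carrier H) \<otimes>\<^bsub>K\<^esub> phi (tau h1) cocycle_prod"
    using h1 c cocycle_closed tau_closed
    by (simp add: cocycle_prod_def KC.finprod_const KC.auto_finprod)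
  finally show ?thesis .
qed

definition coboundary_root :: 'k where
  "coboundary_root = inv\<^bsub>K\<^esub> (cocycle_prod [^]\<^bsub>K\<^esub> orbit_count)"

lemma coboundary_root_closed: "coboundary_root \<in> carrier K"
  using cocycle_prod_closed by (simp add: coboundary_root_def)

lemma cocycle_coboundary:
  assumes h: "h \<in> carrier H"
  shows "cocycle h = coboundary_root \<otimes>\<^bsub>K\<^esub> phi (tau h) (inv\<^bsub>K\<^esub> coboundary_root)"
proof -
  let ?S = "cocycle_prod"
  let ?u = "phi (tau h) ?S"
  have u: "?u \<in> carrier K" and ch: "cocycle h \<in> carrier K"
    using h cocycle_prod_closed tau_closed cocycle_closed by simp_all
  have "cocycle h [^]\<^bsub>K\<^esub> card (carrier H) = ?S \<otimes>\<^bsub>K\<^esub> inv\<^bsub>K\<^esub> ?u"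
    using K.inv_solve_right[of "cocycle h [^]\<^bsub>K\<^esub> card (carrier H)" ?S ?u]
      cocycle_prod_eq[OF h] u ch cocycle_prod_closed by simp
  then have "cocycle h [^]\<^bsub>K\<^esub> (card (carrier H) * orbit_count)
      = ?S [^]\<^bsub>K\<^esub> orbit_count \<otimes>\<^bsub>K\<^esub> inv\<^bsub>K\<^esub> (?u [^]\<^bsub>K\<^esub> orbit_count)"
    using ch u cocycle_prod_closed
    by (simp add: K.nat_pow_pow [symmetric] KC.nat_pow_distrib K.nat_pow_inv)
  then have "cocycle h = inv\<^bsub>K\<^esub> (?S [^]\<^bsub>K\<^esub> orbit_count) \<otimes>\<^bsub>K\<^esub> ?u [^]\<^bsub>K\<^esub> orbit_count"
    using K_inv_pow_card_H[OF ch] u cocycle_prod_closed by (simp add: KC.inv_mult)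
  then show ?thesis
    using h cocycle_prod_closed tau_closed by (simp add: coboundary_root_def)
qed

lemma theta_eq_induced_aut: "theta = induced_aut (coboundary_root, beta)"
proof (rule extensionalityI[of _ "carrier G"])
  show "theta \<in> extensional (carrier G)"
    by (rule theta_extensional)
  show "induced_aut (coboundary_root, beta) \<in> extensional (carrier G)"
    by (simp add: induced_aut_def)
  fix g
  assume "g \<in> carrier G"
  then obtain x h where g: "g = (x, h)" "x \<in> carrier K" "h \<in> carrier H"
    by auto
  then show "theta g = induced_aut (coboundary_root, beta) g"
    using theta_apply cocycle_coboundary conj_H_beta coboundary_root_closed beta_closed tau_closed
    by (simp add: KC.m_ac)
qed

end

context abelian_frobenius
begin

lemma induced_aut_image: "induced_aut ` (carrier K \<times> N) = auto G"
proof
  show "auto G \<subseteq> induced_aut ` (carrier K \<times> N)"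
  proof
    fix theta
    assume "theta \<in> auto G"
    then interpret abelian_frobenius_aut K H phi theta
      by unfold_locales
    show "theta \<in> induced_aut ` (carrier K \<times> N)"
      using theta_eq_induced_aut coboundary_root_closed beta_normalizer by blast
  qed
qed (auto intro: induced_aut_auto)

lemma induced_aut_iso: "induced_aut \<in> iso KN.G (AutoGroup G)"
  using induced_aut_hom_KN inj_on_induced_aut induced_aut_image
  by (simp add: iso_def bij_betw_def)

end

theorem corollary3p4:
  fixes K :: "('k, 'a) monoid_scheme" and H :: "('h, 'b) monoid_scheme"
    and phi :: "'h \<Rightarrow> 'k \<Rightarrow> 'k"
  assumes "comm_group K" and "group H"
    and "finite (carrier K)" and "finite (carrier H)"
    and "phi \<in> hom H (AutoGroup K)"
    and "frobenius_action K H phi"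
  shows "(AutoGroup (semidirect_product K H phi) \<cong>
           semidirect_product K
             ((AutoGroup K)\<lparr>carrier := normalizer (AutoGroup K) (phi ` carrier H)\<rparr>) (\<lambda>a. a))
         \<and> subgroup (carrier K \<times> normalizer (AutoGroup K) (phi ` carrier H)) (holomorph K)"
proof -
  interpret abelian_frobenius K H phi
    using assms comm_group.axioms(2)[OF assms(1)]
    by (intro abelian_frobenius.intro semidirect.intro semidirect_axioms.intro
        abelian_frobenius_axioms.intro)
  have "KN.G \<cong> AutoGroup G"
    using induced_aut_iso by (rule is_isoI)
  then have "AutoGroup G \<cong> KN.G"
    using group.iso_sym[OF KN.group_G] by blast
  moreover have "subgroup (carrier K \<times> N) (holomorph K)"
    using K.subgroup_holomorph[OF normalizer_subgroup] .
  ultimately show ?thesis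
    by blast
qed

end
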